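(* Let $\mathcal U,\mathcal V,\mathcal X$ be real finite-dimensional Euclidean spaces, $f:\mathcal U\to(-\infty,+\infty]$ closed proper convex, $g(v)=\frac12\langle v,\Sigma_g v\rangle-\langle b,v\rangle$ with $\Sigma_g\succeq0$ self-adjoint and $b\in\mathcal V$, $\mathcal F:\mathcal X\to\mathcal U$, $\mathcal G:\mathcal X\to\mathcal V$ linear, $c\in\mathcal X$, $\sigma>0$, and $\mathcal L_\sigma(u,v;x)=f(u)+g(v)+\langle x,\mathcal F^*u+\mathcal G^*v-c\rangle+\frac\sigma2\|\mathcal F^*u+\mathcal G^*v-c\|^2$. Let $\mathcal E_g\succ0$ be self-adjoint with $\mathcal E_g\succeq\sigma^{-1}\Sigma_g+\mathcal G\mathcal G^*$, $\mathcal T_g:=\mathcal E_g-\sigma^{-1}\Sigma_g-\mathcal G\mathcal G^*$, $\mathcal T_f\succeq 0$ self-adjoint on $\mathcal U$, $\widehat{\mathcal T}_f:=\mathcal T_f+\mathcal F\mathcal G^*\mathcal E_g^{-1}\mathcal G\mathcal F^*$. Let $\bar u\in\mathcal U,\bar v\in\mathcal V,\bar x\in\mathcal X$, $\bar c:=c-\mathcal F^*\bar u-\mathcal G^*\bar v$, $\bar\delta_g:=\mathcal F\mathcal G^*\mathcal E_g^{-1}(b-\mathcal G\bar x-\Sigma_g\bar v+\sigma\mathcal G\bar c)$, $\bar\alpha:=\sigma^{-1}b+\mathcal T_g\bar v+\mathcal G(c-\sigma^{-1}\bar x)$, and $$v':=\operatorname{argmin}_v\ \mathcal L_\sigma(\bar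 u,v;\bar x)+\tfrac\sigma2\|v-\bar v\|^2_{\mathcal T_g}=\mathcal E_g^{-1}(\bar\alpha-\mathcal G\mathcal F^*\bar u).$$ Let $(u^+,v^+)$ be the optimal solution of $$\min_{u,v}\ \mathcal L_\sigma(u,v;\bar x)+\tfrac\sigma2\|u-\bar u\|^2_{\widehat{\mathcal T}_f}+\tfrac\sigma2\|v-\bar v\|^2_{\mathcal T_g}.$$ Then $(u^+,v^+)$ is generated exactly by the procedure $$u^+=\operatorname{argmin}_u\ \mathcal L_\sigma(u,\bar v;\bar x)+\langle\bar\delta_g,u\rangle+\tfrac\sigma2\|u-\bar u\|^2_{\mathcal T_f},\qquad v^+=\operatorname{argmin}_v\ \mathcal L_\sigma(u^+,v;\bar x)+\tfrac\sigma2\|v-\bar v\|^2_{\mathcal T_g}=\mathcal E_g^{-1}(\bar\alpha-\mathcal G\mathcal F^*u^+),$$ and equivalently also by the procedure $$u^+=\operatorname{argmin}_u\ \mathcal L_\sigma(u,v';\bar x)+\tfrac\sigma2\|u-\bar u\|^2_{\mathcal T_f},\qquad v^+=\operatorname{argmin}_v\ \mathcal L_\sigma(u^+,v;\bar x)+\tfrac\sigma2\|v-\bar v\|^2_{\mathcal T_g}=\mathcal E_g^{-1}(\bar\alpha-\mathcal G\mathcal F^*u^+).$$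
   Context: $\|w\|_{\mathcal T}^2:=\langle w,\mathcal T w\rangle$; $\succ0$/$\succeq0$ denote positive definite/semidefinite; $\mathcal A\succeq\mathcal B$ means $\mathcal A-\mathcal B\succeq0$. *)

theory Defs
  imports "HOL-Analysis.Analysis"
begin

definition closed_proper_convex :: "('a::euclidean_space \<Rightarrow> ereal) \<Rightarrow> bool" where
  "closed_proper_convex f \<longleftrightarrow>
     (\<forall>x. f x \<noteq> -\<infinity>) \<and> (\<exists>x. f x \<noteq> \<infinity>) \<and>
     convex {(x, t::real). f x \<le> ereal t} \<and> closed {(x, t::real). f x \<le> ereal t}"

definition self_adjoint :: "('a::real_inner \<Rightarrow> 'a) \<Rightarrow> bool" where
  "self_adjoint S \<longleftrightarrow> (\<forall>x y. inner (S x) y = inner x (S y))"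

definition psd :: "('a::real_inner \<Rightarrow> 'a) \<Rightarrow> bool" where
  "psd S \<longleftrightarrow> (\<forall>x. 0 \<le> inner x (S x))"

definition pd :: "('a::real_inner \<Rightarrow> 'a) \<Rightarrow> bool" where
  "pd S \<longleftrightarrow> (\<forall>x. x \<noteq> 0 \<longrightarrow> 0 < inner x (S x))"

definition qn :: "('a::real_inner \<Rightarrow> 'a) \<Rightarrow> 'a \<Rightarrow> real" where
  "qn T w = inner w (T w)"

definition is_minimizer :: "('a \<Rightarrow> 'b::linorder) \<Rightarrow> 'a \<Rightarrow> bool" where
  "is_minimizer \<phi> x \<longleftrightarrow> (\<forall>y. \<phi> x \<le> \<phi> y)"

definition gq :: "('v::real_inner \<Rightarrow> 'v) \<Rightarrow> 'v \<Rightarrow> 'v \<Rightarrow> real" where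
  "gq Sg b v = 1/2 * inner v (Sg v) - inner b v"

definition Lsm :: "('v::real_inner \<Rightarrow> 'v) \<Rightarrow> 'v \<Rightarrow> ('x::real_inner \<Rightarrow> 'u::real_inner) \<Rightarrow>
    ('x \<Rightarrow> 'v) \<Rightarrow> 'x \<Rightarrow> real \<Rightarrow> 'u \<Rightarrow> 'v \<Rightarrow> 'x \<Rightarrow> real" where
  "Lsm Sg b F G c \<sigma> u v x =
     gq Sg b v + inner x (adjoint F u + adjoint G v - c)
     + \<sigma> / 2 * (norm (adjoint F u + adjoint G v - c))\<^sup>2"

definition Lag :: "('u::real_inner \<Rightarrow> ereal) \<Rightarrow> ('v::real_inner \<Rightarrow> 'v) \<Rightarrow> 'v \<Rightarrow>
    ('x::real_inner \<Rightarrow> 'u) \<Rightarrow> ('x \<Rightarrow> 'v) \<Rightarrow> 'x \<Rightarrow> real \<Rightarrow> 'u \<Rightarrow> 'v \<Rightarrow> 'x \<Rightarrow> ereal" where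
  "Lag f Sg b F G c \<sigma> u v x = f u + ereal (Lsm Sg b F G c \<sigma> u v x)"

end

theory Submission
  imports Defs
begin

(*
  Write E = Eg and K = G F*. For fixed u, the v-part of the augmented Lagrangian plus the
  Tg-proximal term is the quadratic  sigma/2 <v, E v> - sigma <abar - K u, v> + const, so it has
  the unique minimizer V u = E^-1 (abar - K u), and the joint objective equals its value at
  (u, V u) plus sigma/2 |v - V u|_E^2. Substituting V u creates the term
  -sigma/2 <E^-1 (abar - K u), abar - K u>, whose quadratic part in u is cancelled exactly by the
  Schur-complement correction F G* E^-1 G F* built into Tfh. What remains is, up to an additive
  constant, the u-objective of the first procedure (the cross term becomes <dg, u>), and also
  that of the second procedure, since dg = sigma F G* (v' - vbar). So minimizing the joint
  problem is the same as minimizing that u-objective and then setting v = V u.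
*)

lemma pd_linear_bij:
  fixes E :: "'a::euclidean_space \<Rightarrow> 'a"
  assumes "linear E" "pd E"
  shows "bij E"
proof -
  have "inj E"
  proof (rule injI)
    fix x y assume "E x = E y"
    then have "inner (x - y) (E (x - y)) = 0" by (simp add: linear_diff[OF assms(1)])
    then show "x = y" using assms(2) unfolding pd_def by (metis less_irrefl right_minus_eq)
  qed
  then show ?thesis using linear_inj_imp_surj[OF assms(1)] by (simp add: bij_def)
qed

lemma qn_zero [simp]: "qn T 0 = 0"
  by (simp add: qn_def)

lemma qn_pd_pos: "pd E \<Longrightarrow> z \<noteq> 0 \<Longrightarrow> qn E z > 0"
  unfolding pd_def qn_def by blast

lemma qn_pd_nonneg: "pd E \<Longrightarrow> qn E z \<ge> 0"
  using qn_pd_pos[of E z] by (cases "z = 0") auto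

lemma qn_complete_square:
  assumes "linear E" "self_adjoint E" "E w = y"
  shows "\<sigma>/2 * inner v (E v) - \<sigma> * inner y v = \<sigma>/2 * qn E (v - w) - \<sigma>/2 * inner w y"
proof -
  have "inner w (E v) = inner y v"
    using assms(2,3) unfolding self_adjoint_def by (metis inner_commute)
  then show ?thesis
    using assms(3) unfolding qn_def
    by (simp add: linear_diff[OF assms(1)] inner_diff_left inner_diff_right inner_commute algebra_simps)
qed

lemma inner_inv_diff:
  fixes E :: "'a::real_inner \<Rightarrow> 'a"
  assumes "linear E" "self_adjoint E" "bij E"
  shows "inner (inv E (y - z)) (y - z)
       = inner (inv E y) y - 2 * inner (inv E y) z + inner (inv E z) z"
proof -
  define p q where "p = inv E y" and "q = inv E z"
  have Ep: "E p = y" and Eq: "E q = z"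
    unfolding p_def q_def using assms(3) by (simp_all add: bij_is_surj surj_f_inv_f)
  have "inv E (y - z) = p - q"
    using assms(3) Ep Eq by (metis bij_inv_eq_iff linear_diff[OF assms(1)])
  moreover have "inner q y = inner p z"
    using assms(2) Ep Eq unfolding self_adjoint_def by (metis inner_commute)
  ultimately show ?thesis
    unfolding p_def[symmetric] q_def[symmetric] \<open>inv E (y - z) = p - q\<close>
    by (simp add: inner_diff_left inner_diff_right inner_commute)
qed

lemma is_minimizer_ereal_add_left_iff:
  assumes "\<bar>a\<bar> \<noteq> \<infinity>"
  shows "is_minimizer (\<lambda>x. a + ereal (h x)) x \<longleftrightarrow> is_minimizer h x"
  using assms unfolding is_minimizer_def by (cases a) auto

lemma is_minimizer_ereal_shift_iff:
  assumes "\<And>x. f x \<noteq> -\<infinity>"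
  shows "is_minimizer (\<lambda>x. f x + ereal (h x + C)) x \<longleftrightarrow> is_minimizer (\<lambda>x. f x + ereal (h x)) x"
proof -
  have "f x + ereal (h x + C) \<le> f y + ereal (h y + C) \<longleftrightarrow> f x + ereal (h x) \<le> f y + ereal (h y)" for y
    using assms[of x] assms[of y] by (cases "f x"; cases "f y") auto
  then show ?thesis unfolding is_minimizer_def by simp
qed

lemma argmin_eq_if_quadratic_growth:
  assumes "pd E" "\<sigma> > 0" "\<And>v. h v = h a + \<sigma>/2 * qn E (v - a)"
  shows "{v. is_minimizer h v} = {a}"
proof -
  have "h a < h v" if "v \<noteq> a" for v
  proof -
    have "\<sigma>/2 * qn E (v - a) > 0" using assms(2) qn_pd_pos[OF assms(1)] that by simp
    then show ?thesis using assms(3)[of v] by linarith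
  qed
  then have "is_minimizer h v \<longleftrightarrow> v = a" for v
    unfolding is_minimizer_def by (metis linorder_not_le order_less_imp_le)
  then show ?thesis by blast
qed

lemma
  fixes P :: "'a \<Rightarrow> ereal" and q :: "'b::group_add \<Rightarrow> real"
  assumes "\<And>z. q z \<ge> 0" "q 0 = 0"
  shows is_minimizer_pair_imp_fst:
      "is_minimizer (\<lambda>(u, v). P u + ereal (q (v - w u))) (u, v) \<Longrightarrow> is_minimizer P u"
    and is_minimizer_fst_imp_pair:
      "is_minimizer P u \<Longrightarrow> is_minimizer (\<lambda>(u, v). P u + ereal (q (v - w u))) (u, w u)"
proof -
  have ge: "P u \<le> P u + ereal (q z)" for u z using assms(1)[of z] by (simp add: add_increasing2)
  { assume "is_minimizer (\<lambda>(u, v). P u + ereal (q (v - w u))) (u, v)"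
    then have "P u + ereal (q (v - w u)) \<le> P y" for y
      unfolding is_minimizer_def
      by (metis (no_types, lifting) assms(2) add.right_neutral case_prod_conv right_minus_eq zero_ereal_def)
    then show "is_minimizer P u" unfolding is_minimizer_def using ge order_trans by blast }
  { assume "is_minimizer P u"
    then show "is_minimizer (\<lambda>(u, v). P u + ereal (q (v - w u))) (u, w u)"
      unfolding is_minimizer_def using ge assms(2) order_trans by (fastforce simp: zero_ereal_def) }
qed

lemma is_minimizer_pair_snd_eq:
  fixes P :: "'a \<Rightarrow> ereal" and q :: "'b::group_add \<Rightarrow> real"
  assumes "\<And>z. z \<noteq> 0 \<Longrightarrow> q z > 0" "q 0 = 0" "\<bar>P u\<bar> \<noteq> \<infinity>"
    and "is_minimizer (\<lambda>(u, v). P u + ereal (q (v - w u))) (u, v)"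
  shows "v = w u"
proof (rule ccontr)
  assume "v \<noteq> w u"
  then have "P u + ereal 0 < P u + ereal (q (v - w u))"
    using assms(1,3) by (cases "P u") auto
  moreover have "P u + ereal (q (v - w u)) \<le> P u + ereal (q (w u - w u))"
    using assms(4) unfolding is_minimizer_def by (metis (no_types, lifting) case_prod_conv)
  ultimately show False using assms(2) by simp
qed

text \<open>Properness only guarantees that a minimizer has a finite \<open>f\<close>-value, which is what
  pins down its \<open>v\<close>-component.\<close>

locale prox_admm_step =
  fixes f :: "'u::euclidean_space \<Rightarrow> ereal"
    and Sg :: "'v::euclidean_space \<Rightarrow> 'v" and b :: 'v
    and F :: "'x::euclidean_space \<Rightarrow> 'u" and G :: "'x \<Rightarrow> 'v" and c :: 'x
    and \<sigma> :: real and Eg :: "'v \<Rightarrow> 'v" and Tf :: "'u \<Rightarrow> 'u"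
    and ubar :: 'u and vbar :: 'v and xbar :: 'x
    and Tg :: "'v \<Rightarrow> 'v" and Tfh :: "'u \<Rightarrow> 'u" and dg :: 'u and abar :: 'v
  assumes f_not_minf: "\<And>u. f u \<noteq> -\<infinity>"
    and f_proper: "\<exists>u. f u \<noteq> \<infinity>"
    and linear_Sg: "linear Sg" and self_adjoint_Sg: "self_adjoint Sg"
    and linear_F: "linear F" and linear_G: "linear G"
    and sigma_pos: "\<sigma> > 0"
    and linear_Eg: "linear Eg" and self_adjoint_Eg: "self_adjoint Eg" and pd_Eg: "pd Eg"
    and Tg_eq: "Tg = (\<lambda>v. Eg v - (1/\<sigma>) *\<^sub>R Sg v - G (adjoint G v))"
    and Tfh_eq: "Tfh = (\<lambda>u. Tf u + F (adjoint G (inv Eg (G (adjoint F u)))))"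
    and dg_eq: "dg = F (adjoint G (inv Eg (b - G xbar - Sg vbar
                    + \<sigma> *\<^sub>R G (c - adjoint F ubar - adjoint G vbar))))"
    and abar_eq: "abar = (1/\<sigma>) *\<^sub>R b + Tg vbar + G (c - (1/\<sigma>) *\<^sub>R xbar)"
begin

abbreviation phi :: "'u \<Rightarrow> 'v \<Rightarrow> real" where
  "phi u v \<equiv> Lsm Sg b F G c \<sigma> u v xbar + \<sigma>/2 * qn Tg (v - vbar)"

abbreviation psi :: "'u \<Rightarrow> real" where
  "psi u \<equiv> Lsm Sg b F G c \<sigma> u vbar xbar + inner dg u + \<sigma>/2 * qn Tf (u - ubar)"

abbreviation vstep :: "'u \<Rightarrow> 'v" where
  "vstep u \<equiv> inv Eg (abar - G (adjoint F u))"

lemma adjoint_F: "inner (adjoint F y) z = inner y (F z)" "inner z (adjoint F y) = inner y (F z)"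
  using adjoint_clauses[OF linear_F] by (auto simp: inner_commute)

lemma adjoint_G: "inner (adjoint G y) z = inner y (G z)" "inner z (adjoint G y) = inner y (G z)"
  using adjoint_clauses[OF linear_G] by (auto simp: inner_commute)

lemma Eg_inv: "Eg (inv Eg y) = y" "inv Eg (Eg z) = z"
  using pd_linear_bij[OF linear_Eg pd_Eg] by (simp_all add: bij_is_surj surj_f_inv_f bij_is_inj)

lemma phi_quadratic:
  "phi u v = \<sigma>/2 * inner v (Eg v) - \<sigma> * inner (abar - G (adjoint F u)) v + phi u 0"
proof -
  note lin = linear_simps[OF linear_Sg[unfolded linear_conv_bounded_linear]]
    linear_simps[OF linear_Eg[unfolded linear_conv_bounded_linear]]
    linear_simps[OF linear_F[unfolded linear_conv_bounded_linear]]
    linear_simps[OF linear_G[unfolded linear_conv_bounded_linear]]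
    linear_simps[OF adjoint_linear[OF linear_G, unfolded linear_conv_bounded_linear]]
  have sym: "inner vbar (Sg v) = inner v (Sg vbar)" "inner vbar (Eg v) = inner v (Eg vbar)"
    "inner vbar (G (adjoint G v)) = inner v (G (adjoint G vbar))"
    "inner u (F (adjoint G v)) = inner v (G (adjoint F u))"
    using self_adjoint_Sg self_adjoint_Eg unfolding self_adjoint_def
    by (metis inner_commute adjoint_F adjoint_G)+
  show ?thesis
    unfolding Lsm_def gq_def qn_def power2_norm_eq_inner Tg_eq abar_eq
    using sigma_pos
    by (simp add: lin sym inner_add_left inner_add_right inner_diff_left inner_diff_right
        adjoint_G adjoint_F algebra_simps inner_commute)
qed

lemma phi_complete_square: "phi u v = phi u (vstep u) + \<sigma>/2 * qn Eg (v - vstep u)"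
proof -
  note square = qn_complete_square[OF linear_Eg self_adjoint_Eg Eg_inv(1)[of "abar - G (adjoint F u)"],
      of \<sigma>]
  have "inner (vstep u) (Eg (vstep u)) = inner (abar - G (adjoint F u)) (vstep u)"
    by (simp add: Eg_inv inner_commute)
  then show ?thesis
    using square[of v] square[of "vstep u"] phi_quadratic[of u v] phi_quadratic[of u "vstep u"]
    by (simp add: inner_commute)
qed

lemma argmin_phi: "{v. is_minimizer (phi u) v} = {vstep u}"
  by (rule argmin_eq_if_quadratic_growth[OF pd_Eg sigma_pos phi_complete_square])

lemma inner_dg: "inner dg u = \<sigma> * inner (vstep ubar - vbar) (G (adjoint F u))"
proof -
  have "Eg (\<sigma> *\<^sub>R (vstep ubar - vbar)) = b - G xbar - Sg vbar
          + \<sigma> *\<^sub>R G (c - adjoint F ubar - adjoint G vbar)"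
    using sigma_pos
    by (simp add: linear_scale[OF linear_Eg] linear_diff[OF linear_Eg] Eg_inv abar_eq Tg_eq
        scaleR_diff_right scaleR_add_right linear_diff[OF linear_G] linear_scale[OF linear_G]
        linear_add[OF linear_G] algebra_simps)
  then have "dg = \<sigma> *\<^sub>R F (adjoint G (vstep ubar - vbar))"
    unfolding dg_eq
    by (metis Eg_inv(2) linear_scale[OF linear_F] linear_scale[OF adjoint_linear[OF linear_G]])
  then show ?thesis by (metis adjoint_F(1) adjoint_G(1) inner_commute inner_scaleR_left)
qed

lemma qn_Tfh: "qn Tfh d = qn Tf d + inner (inv Eg (G (adjoint F d))) (G (adjoint F d))"
  unfolding Tfh_eq qn_def by (simp add: inner_add_right) (metis adjoint_F(1) adjoint_G(2) inner_commute)

lemma reduced_objective_eq_psi_plus_const: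
  "\<exists>C. \<forall>u. phi u (vstep u) + \<sigma>/2 * qn Tfh (u - ubar) = psi u + C"
proof -
  define K where "K = (\<lambda>u. G (adjoint F u))"
  have linear_K: "linear K"
    unfolding K_def using linear_compose[OF adjoint_linear[OF linear_F] linear_G] by (simp add: o_def)
  have K_apply: "G (adjoint F z) = K z" for z by (simp add: K_def)
  have "phi u (vstep u) + \<sigma>/2 * qn Tfh (u - ubar) - psi u
      = - \<sigma>/2 * inner (vstep ubar) (abar - K ubar) - \<sigma>/2 * inner vbar (Eg vbar)
        + \<sigma> * inner (abar - K ubar) vbar - \<sigma> * inner (vstep ubar - vbar) (K ubar)" for u
  proof -
    have "abar - K u = (abar - K ubar) - K (u - ubar)"
      by (simp add: linear_diff[OF linear_K])
    then have "\<sigma> * inner (vstep u) (abar - K u) = \<sigma> * (inner (vstep ubar) (abar - K ubar)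
        - 2 * inner (vstep ubar) (K (u - ubar)) + inner (inv Eg (K (u - ubar))) (K (u - ubar)))"
      using inner_inv_diff[OF linear_Eg self_adjoint_Eg pd_linear_bij[OF linear_Eg pd_Eg]]
      unfolding K_def by metis
    then show ?thesis
      using phi_quadratic[of u "vstep u"] phi_quadratic[of u vbar]
      unfolding qn_Tfh inner_dg K_apply
      by (simp add: Eg_inv linear_diff[OF linear_K] inner_diff_left inner_diff_right
          inner_commute algebra_simps)
  qed
  then show ?thesis by (metis add_diff_cancel_left' diff_add_cancel add.commute)
qed

lemma second_objective_eq_psi_plus_const:
  "\<exists>C. \<forall>u. Lsm Sg b F G c \<sigma> u (vstep ubar) xbar + \<sigma>/2 * qn Tf (u - ubar) = psi u + C"
proof -
  have "Lsm Sg b F G c \<sigma> u (vstep ubar) xbar + \<sigma>/2 * qn Tf (u - ubar) - psi u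
      = - \<sigma>/2 * qn Tg (vstep ubar - vbar) + \<sigma>/2 * inner (vstep ubar) (Eg (vstep ubar))
        - \<sigma>/2 * inner vbar (Eg vbar) - \<sigma> * inner abar (vstep ubar - vbar)" for u
    using phi_quadratic[of u "vstep ubar"] phi_quadratic[of u vbar]
    unfolding inner_dg
    by (simp add: inner_diff_left inner_diff_right inner_commute algebra_simps)
  then show ?thesis by (metis add_diff_cancel_left' diff_add_cancel add.commute)
qed

abbreviation joint_obj :: "'u \<Rightarrow> 'v \<Rightarrow> ereal" where
  "joint_obj u v \<equiv> Lag f Sg b F G c \<sigma> u v xbar
     + ereal (\<sigma>/2 * qn Tfh (u - ubar) + \<sigma>/2 * qn Tg (v - vbar))"

abbreviation first_obj :: "'u \<Rightarrow> ereal" where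
  "first_obj u \<equiv> Lag f Sg b F G c \<sigma> u vbar xbar + ereal (inner dg u + \<sigma>/2 * qn Tf (u - ubar))"

abbreviation second_obj :: "'u \<Rightarrow> ereal" where
  "second_obj u \<equiv> Lag f Sg b F G c \<sigma> u (vstep ubar) xbar + ereal (\<sigma>/2 * qn Tf (u - ubar))"

lemma is_minimizer_f_shift_iff:
  "is_minimizer (\<lambda>u. f u + ereal (h u + C)) u \<longleftrightarrow> is_minimizer (\<lambda>u. f u + ereal (h u)) u"
  by (rule is_minimizer_ereal_shift_iff) (rule f_not_minf)

lemma first_obj_eq: "first_obj u = f u + ereal (psi u)"
  unfolding Lag_def by (simp add: add.assoc)

lemma joint_obj_decomp:
  obtains C where "\<And>u v. joint_obj u v = f u + ereal (psi u + C) + ereal (\<sigma>/2 * qn Eg (v - vstep u))"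
proof -
  obtain C where C: "\<And>u. phi u (vstep u) + \<sigma>/2 * qn Tfh (u - ubar) = psi u + C"
    using reduced_objective_eq_psi_plus_const by blast
  have "joint_obj u v = f u + ereal (psi u + C) + ereal (\<sigma>/2 * qn Eg (v - vstep u))" for u v
  proof -
    have "Lsm Sg b F G c \<sigma> u v xbar + (\<sigma>/2 * qn Tfh (u - ubar) + \<sigma>/2 * qn Tg (v - vbar))
        = psi u + C + \<sigma>/2 * qn Eg (v - vstep u)"
      using phi_complete_square[of u v] C[of u] by linarith
    then show ?thesis unfolding Lag_def add.assoc plus_ereal.simps by simp
  qed
  then show thesis by (rule that)
qed

lemma is_minimizer_second_obj_iff: "is_minimizer second_obj u \<longleftrightarrow> is_minimizer first_obj u"
proof -
  obtain C where C: "\<And>u. Lsm Sg b F G c \<sigma> u (vstep ubar) xbar + \<sigma>/2 * qn Tf (u - ubar) = psi u + C"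
    using second_objective_eq_psi_plus_const by blast
  have "second_obj u = f u + ereal (psi u + C)" for u
    unfolding Lag_def add.assoc plus_ereal.simps C ..
  then show ?thesis
    unfolding first_obj_eq using is_minimizer_f_shift_iff[of "\<lambda>u. psi u" C] by simp
qed

lemma first_obj_minimizer_finite:
  assumes "is_minimizer first_obj u"
  shows "\<bar>f u\<bar> \<noteq> \<infinity>"
proof -
  obtain u0 where "f u0 \<noteq> \<infinity>" using f_proper by blast
  then have "f u0 + ereal (psi u0) \<noteq> \<infinity>" by simp
  moreover have "f u + ereal (psi u) \<le> f u0 + ereal (psi u0)"
    using assms unfolding is_minimizer_def first_obj_eq by blast
  ultimately have "f u \<noteq> \<infinity>" by auto
  then show ?thesis using f_not_minf[of u] by auto
qed

lemma joint_obj_minimizer_imp_first: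
  assumes "is_minimizer (\<lambda>(u, v). joint_obj u v) (u, v)"
  shows "is_minimizer first_obj u" and "v = vstep u"
proof -
  obtain C where C: "\<And>u v. joint_obj u v = f u + ereal (psi u + C) + ereal (\<sigma>/2 * qn Eg (v - vstep u))"
    using joint_obj_decomp by blast
  have q: "\<sigma>/2 * qn Eg z \<ge> 0" "z \<noteq> 0 \<Longrightarrow> \<sigma>/2 * qn Eg z > 0" for z
    using qn_pd_nonneg[OF pd_Eg] qn_pd_pos[OF pd_Eg] sigma_pos by simp_all
  have min: "is_minimizer (\<lambda>(u, v). f u + ereal (psi u + C) + ereal (\<sigma>/2 * qn Eg (v - vstep u))) (u, v)"
    using assms unfolding C .
  show first: "is_minimizer first_obj u"
    using is_minimizer_pair_imp_fst[OF q(1) _ min] is_minimizer_f_shift_iff[of "\<lambda>u. psi u" C]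
    unfolding first_obj_eq by simp
  show "v = vstep u"
    using first_obj_minimizer_finite[OF first] f_not_minf
    by (intro is_minimizer_pair_snd_eq[OF q(2) _ _ min]) auto
qed

lemma first_obj_minimizer_imp_joint:
  assumes "is_minimizer first_obj u"
  shows "is_minimizer (\<lambda>(u, v). joint_obj u v) (u, vstep u)"
proof -
  obtain C where C: "\<And>u v. joint_obj u v = f u + ereal (psi u + C) + ereal (\<sigma>/2 * qn Eg (v - vstep u))"
    using joint_obj_decomp by blast
  have "is_minimizer (\<lambda>u. f u + ereal (psi u + C)) u"
    using assms is_minimizer_f_shift_iff[of "\<lambda>u. psi u" C] unfolding first_obj_eq by simp
  moreover have "\<sigma>/2 * qn Eg z \<ge> 0" for z using qn_pd_nonneg[OF pd_Eg] sigma_pos by simp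
  ultimately show ?thesis
    unfolding C using is_minimizer_fst_imp_pair[where q = "\<lambda>z. \<sigma>/2 * qn Eg z" and w = vstep] by simp
qed

lemma argmin_v_subproblem:
  assumes "\<bar>f u\<bar> \<noteq> \<infinity>"
  shows "{v. is_minimizer (\<lambda>v. Lag f Sg b F G c \<sigma> u v xbar + ereal (\<sigma>/2 * qn Tg (v - vbar))) v}
    = {vstep u}"
proof -
  have "Lag f Sg b F G c \<sigma> u v xbar + ereal (\<sigma>/2 * qn Tg (v - vbar)) = f u + ereal (phi u v)" for v
    unfolding Lag_def by (simp add: add.assoc)
  then have "is_minimizer (\<lambda>v. Lag f Sg b F G c \<sigma> u v xbar + ereal (\<sigma>/2 * qn Tg (v - vbar))) v
      \<longleftrightarrow> is_minimizer (phi u) v" for v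
    using is_minimizer_ereal_add_left_iff[OF assms, of "phi u" v] by simp
  then show ?thesis using argmin_phi[of u] by blast
qed

end

theorem proposition2p2:
  fixes f :: "'u::euclidean_space \<Rightarrow> ereal"
    and Sg :: "'v::euclidean_space \<Rightarrow> 'v" and b :: "'v"
    and F :: "'x::euclidean_space \<Rightarrow> 'u" and G :: "'x \<Rightarrow> 'v" and c :: "'x"
    and \<sigma> :: real
    and Eg :: "'v \<Rightarrow> 'v" and Tf :: "'u \<Rightarrow> 'u"
    and ubar up :: 'u and vbar vp :: 'v and xbar :: 'x
    and Tg :: "'v \<Rightarrow> 'v" and Tfh :: "'u \<Rightarrow> 'u"
    and cbar :: 'x and dg :: 'u and abar :: 'v and v' :: 'v
  assumes f: "closed_proper_convex f"
    and Sg: "linear Sg" "self_adjoint Sg" "psd Sg"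
    and FG: "linear F" "linear G"
    and sigma: "\<sigma> > 0"
    and Eg: "linear Eg" "self_adjoint Eg" "pd Eg"
            "psd (\<lambda>v. Eg v - (1/\<sigma>) *\<^sub>R Sg v - G (adjoint G v))"
    and Tf: "linear Tf" "self_adjoint Tf" "psd Tf"
    and Tg_def: "Tg \<equiv> (\<lambda>v. Eg v - (1/\<sigma>) *\<^sub>R Sg v - G (adjoint G v))"
    and Tfh_def: "Tfh \<equiv> (\<lambda>u. Tf u + F (adjoint G (inv Eg (G (adjoint F u)))))"
    and cbar_def: "cbar \<equiv> c - adjoint F ubar - adjoint G vbar"
    and dg_def: "dg \<equiv> F (adjoint G (inv Eg (b - G xbar - Sg vbar + \<sigma> *\<^sub>R G cbar)))"
    and abar_def: "abar \<equiv> (1/\<sigma>) *\<^sub>R b + Tg vbar + G (c - (1/\<sigma>) *\<^sub>R xbar)"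
    and v'_def: "v' \<equiv> inv Eg (abar - G (adjoint F ubar))"
    and opt: "is_minimizer (\<lambda>(u, v). Lag f Sg b F G c \<sigma> u v xbar
                 + ereal (\<sigma>/2 * qn Tfh (u - ubar) + \<sigma>/2 * qn Tg (v - vbar))) (up, vp)"
  shows
    \<comment> \<open>the constant f ubar is dropped from the v'-subproblem\<close>
    "{v. is_minimizer (\<lambda>v. Lsm Sg b F G c \<sigma> ubar v xbar + \<sigma>/2 * qn Tg (v - vbar)) v} = {v'}
     \<and> is_minimizer (\<lambda>u. Lag f Sg b F G c \<sigma> u vbar xbar
                          + ereal (inner dg u + \<sigma>/2 * qn Tf (u - ubar))) up
     \<and> is_minimizer (\<lambda>u. Lag f Sg b F G c \<sigma> u v' xbar + ereal (\<sigma>/2 * qn Tf (u - ubar))) up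
     \<and> {v. is_minimizer (\<lambda>v. Lag f Sg b F G c \<sigma> up v xbar + ereal (\<sigma>/2 * qn Tg (v - vbar))) v}
         = {inv Eg (abar - G (adjoint F up))}
     \<and> vp = inv Eg (abar - G (adjoint F up))
     \<and> (\<forall>u. is_minimizer (\<lambda>u. Lag f Sg b F G c \<sigma> u vbar xbar
                          + ereal (inner dg u + \<sigma>/2 * qn Tf (u - ubar))) u
          \<longrightarrow> is_minimizer (\<lambda>(u, v). Lag f Sg b F G c \<sigma> u v xbar
                 + ereal (\<sigma>/2 * qn Tfh (u - ubar) + \<sigma>/2 * qn Tg (v - vbar)))
               (u, inv Eg (abar - G (adjoint F u))))
     \<and> (\<forall>u. is_minimizer (\<lambda>u. Lag f Sg b F G c \<sigma> u v' xbar + ereal (\<sigma>/2 * qn Tf (u - ubar))) u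
          \<longrightarrow> is_minimizer (\<lambda>(u, v). Lag f Sg b F G c \<sigma> u v xbar
                 + ereal (\<sigma>/2 * qn Tfh (u - ubar) + \<sigma>/2 * qn Tg (v - vbar)))
               (u, inv Eg (abar - G (adjoint F u))))"
proof -
  interpret prox_admm_step f Sg b F G c \<sigma> Eg Tf ubar vbar xbar Tg Tfh dg abar
    using f Sg(1,2) FG sigma Eg(1-3) unfolding closed_proper_convex_def
    by (intro prox_admm_step.intro) (auto simp: Tg_def Tfh_def dg_def cbar_def abar_def)
  have up: "is_minimizer first_obj up" and vp: "vp = vstep up"
    using joint_obj_minimizer_imp_first[OF opt] by blast+
  show ?thesis
    unfolding v'_def
    using up vp argmin_phi[of ubar] argmin_v_subproblem[OF first_obj_minimizer_finite[OF up]]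
      is_minimizer_second_obj_iff first_obj_minimizer_imp_joint
    by (intro conjI allI impI) simp_all
qed

end
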